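(* Let $f$ be a Boolean function with $s={\rm psize}(f)\ge1$ that is equivalent to a depth-$d$ decision tree. Then the zero-depth of $T_f$ is at most $d\ln s+1$.
   Context: Every Boolean function has a unique representation as a sum over $\mathbb{F}_2$ of distinct monomials; ${\rm psize}(f)$ is the number of non-constant monomials in it. A decision tree computes a Boolean function by following from the root, at an internal node labeled $x_i$, the 0-child (left) if $x_i=0$ and the 1-child (right) if $x_i=1$, outputting the 0/1 leaf label; its depth is the maximum number of edges on a root-to-leaf path. For a Boolean function $f$, the decision tree $T_f$ is defined recursively: if $f$ is constant $\xi$, $T_f$ is a leaf labeled $\xi$; otherwise the root is labeled by $x_i$ where $i$ is the smallest index among those minimizing ${\rm psize}(f_{|x_i\gets0})$, its left subtree is $T_{f_{|x_i\gets0}}$ and its right subtree is $T_{f_{|x_i\gets1}}$. The zero-depth of a decision tree is the maximum, over root-to-leaf paths, of the number of edges on the path that go to a left (0-) child. *)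

theory Defs
  imports Complex_Main
begin

text \<open>A Boolean function on the variables x_0, ..., x_(n-1) is modelled as
  f :: nat set => bool, where an input point is the set of indices of variables
  that are 1; only inputs x with x \<subseteq> {..<n} matter.\<close>

type_synonym bfun = "nat set \<Rightarrow> bool"

definition anf :: "nat \<Rightarrow> bfun \<Rightarrow> nat set set" where
  "anf n f = (THE M. M \<subseteq> Pow {..<n} \<and>
      (\<forall>x. x \<subseteq> {..<n} \<longrightarrow> (f x \<longleftrightarrow> odd (card {S \<in> M. S \<subseteq> x}))))"

definition psize :: "nat \<Rightarrow> bfun \<Rightarrow> nat" where
  "psize n f = card (anf n f - {{}})"

definition restr :: "nat \<Rightarrow> bool \<Rightarrow> bfun \<Rightarrow> bfun" where
  "restr i b f = (\<lambda>x. f (if b then insert i x else x - {i}))"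

definition is_const :: "nat \<Rightarrow> bfun \<Rightarrow> bool" where
  "is_const n f \<longleftrightarrow> (\<forall>x y. x \<subseteq> {..<n} \<longrightarrow> y \<subseteq> {..<n} \<longrightarrow> f x = f y)"

datatype dtree = Leaf bool | Node nat dtree dtree

fun evalT :: "dtree \<Rightarrow> nat set \<Rightarrow> bool" where
  "evalT (Leaf b) x = b"
| "evalT (Node i l r) x = (if i \<in> x then evalT r x else evalT l x)"

fun depth :: "dtree \<Rightarrow> nat" where
  "depth (Leaf b) = 0"
| "depth (Node i l r) = Suc (max (depth l) (depth r))"

fun zero_depth :: "dtree \<Rightarrow> nat" where
  "zero_depth (Leaf b) = 0"
| "zero_depth (Node i l r) = max (Suc (zero_depth l)) (zero_depth r)"

definition split_var :: "nat \<Rightarrow> bfun \<Rightarrow> nat" where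
  "split_var n f = (LEAST i. i < n \<and>
      (\<forall>j<n. psize n (restr i False f) \<le> psize n (restr j False f)))"

text \<open>Construction of T_f with a fuel parameter k; since every split variable is
  relevant and becomes irrelevant afterwards, fuel n always suffices, so the
  fallback leaf in case 0 is never reached for non-constant f.\<close>
fun Tf_aux :: "nat \<Rightarrow> nat \<Rightarrow> bfun \<Rightarrow> dtree" where
  "Tf_aux n 0 f = Leaf (f {})"
| "Tf_aux n (Suc k) f =
     (if is_const n f then Leaf (f {})
      else (let i = split_var n f in
            Node i (Tf_aux n k (restr i False f)) (Tf_aux n k (restr i True f))))"

definition Tf :: "nat \<Rightarrow> bfun \<Rightarrow> dtree" where
  "Tf n f = Tf_aux n n f"

end

theory Submission imports Defs begin

text \<open>Setting x_i to 0 deletes exactly the monomials containing x_i. If f is computed by a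
  depth-d tree T, zeroing the at most d variables on the all-zero path of T makes f constant,
  so these variables meet every non-constant monomial and one of them occurs in at least
  psize f / d of them. Hence the greedy variable shrinks psize by a factor 1 - 1/d along every
  0-edge, while psize never grows along a 1-edge; so the potential d ln (psize) + 1 drops by
  at least 1 along every 0-edge and bounds the zero-depth.\<close>

definition is_anf :: "nat \<Rightarrow> nat set set \<Rightarrow> bfun \<Rightarrow> bool" where
  "is_anf n M g \<longleftrightarrow> M \<subseteq> Pow {..<n} \<and>
      (\<forall>x. x \<subseteq> {..<n} \<longrightarrow> (g x \<longleftrightarrow> odd (card {S \<in> M. S \<subseteq> x})))"

lemma is_anf_imp_finite: "is_anf n M g \<Longrightarrow> finite M"
  unfolding is_anf_def by (meson finite_Pow_iff finite_lessThan finite_subset)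

lemma odd_card_sym_diff:
  assumes "finite A" "finite B"
  shows "odd (card (sym_diff A B)) \<longleftrightarrow> odd (card A) \<noteq> odd (card B)"
proof -
  have "card A = card (A - B) + card (A \<inter> B)" "card B = card (B - A) + card (A \<inter> B)"
    using assms by (metis card_Diff_subset_Int inf_commute le_add_diff_inverse2
        card_mono Int_lower2 finite_Int)+
  moreover have "card (sym_diff A B) = card (A - B) + card (B - A)"
    using assms by (intro card_Un_disjoint) auto
  ultimately show ?thesis by auto
qed

lemma is_anf_unique:
  assumes "is_anf n M1 g" "is_anf n M2 g" shows "M1 = M2"
proof (rule ccontr)
  assume "M1 \<noteq> M2"
  define D where "D = sym_diff M1 M2"
  have fin: "finite M1" "finite M2" using assms by (simp_all add: is_anf_imp_finite)
  have "D \<noteq> {}" "finite D" using \<open>M1 \<noteq> M2\<close> fin unfolding D_def by auto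
  then obtain S where S: "S \<in> D" "\<forall>T\<in>D. T \<subseteq> S \<longrightarrow> S = T"
    using finite_has_minimal by blast
  have "S \<subseteq> {..<n}" using S(1) assms unfolding D_def is_anf_def by auto
  then have same_parity: "odd (card {T \<in> M1. T \<subseteq> S}) = odd (card {T \<in> M2. T \<subseteq> S})"
    using assms unfolding is_anf_def by blast
  have "sym_diff {T \<in> M1. T \<subseteq> S} {T \<in> M2. T \<subseteq> S} = {T \<in> D. T \<subseteq> S}"
    unfolding D_def by auto
  also have "\<dots> = {S}" using S by auto
  finally show False using odd_card_sym_diff[of "{T \<in> M1. T \<subseteq> S}" "{T \<in> M2. T \<subseteq> S}"]
    same_parity fin by simp
qed

text \<open>Existence by counting: the map sending a set of monomials to the set of points where
  its sum is 1 is an injective self-map of the finite set Pow (Pow {..<n}), hence surjective.\<close>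

lemma is_anf_exists: "\<exists>M. is_anf n M g"
proof -
  define N where "N = Pow {..<n::nat}"
  define \<Phi> where "\<Phi> M = {x \<in> N. odd (card {S \<in> M. S \<subseteq> x})}" for M :: "nat set set"
  have is_anf_\<Phi>: "is_anf n M (\<lambda>x. x \<in> \<Phi> M)" if "M \<in> Pow N" for M
    using that unfolding is_anf_def \<Phi>_def N_def by auto
  have "inj_on \<Phi> (Pow N)"
  proof (rule inj_onI)
    fix M1 M2 assume "M1 \<in> Pow N" "M2 \<in> Pow N" "\<Phi> M1 = \<Phi> M2"
    then show "M1 = M2"
      using is_anf_\<Phi>[of M1] is_anf_\<Phi>[of M2] by (metis is_anf_unique)
  qed
  moreover have "\<Phi> ` Pow N \<subseteq> Pow N" "finite (Pow N)" unfolding \<Phi>_def N_def by auto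
  ultimately have "\<Phi> ` Pow N = Pow N" by (simp add: endo_inj_surj)
  then have "{x \<in> N. g x} \<in> \<Phi> ` Pow N" by blast
  then obtain M where M: "M \<in> Pow N" "\<Phi> M = {x \<in> N. g x}" by auto
  have "is_anf n M g"
    using is_anf_\<Phi>[OF M(1)] unfolding M(2) is_anf_def N_def by simp
  then show ?thesis ..
qed

lemma is_anf_anf: "is_anf n (anf n g) g"
proof -
  have "\<exists>!M. is_anf n M g" using is_anf_exists is_anf_unique by blast
  then show ?thesis unfolding anf_def is_anf_def[symmetric] by (rule theI')
qed

lemma anf_eqI: "is_anf n M g \<Longrightarrow> anf n g = M"
  using is_anf_anf is_anf_unique by blast

lemma finite_anf: "finite (anf n g)"
  using is_anf_anf by (rule is_anf_imp_finite)

lemma anf_subset_Pow: "anf n g \<subseteq> Pow {..<n}"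
  using is_anf_anf unfolding is_anf_def by blast

lemma anf_const:
  assumes "\<And>x. x \<subseteq> {..<n} \<Longrightarrow> g x = c"
  shows "anf n g = (if c then {{}} else {})"
proof (rule anf_eqI)
  have "{S. S = {} \<and> S \<subseteq> x} = {{}}" for x :: "nat set" by auto
  then show "is_anf n (if c then {{}} else {}) g"
    unfolding is_anf_def using assms by auto
qed

lemma is_const_if_psize_eq_0:
  assumes "psize n g = 0" shows "is_const n g"
proof -
  have "anf n g \<subseteq> {{}}" using assms finite_anf unfolding psize_def by auto
  then have "{S \<in> anf n g. S \<subseteq> x} = anf n g" for x by auto
  then have "g x = odd (card (anf n g))" if "x \<subseteq> {..<n}" for x
    using is_anf_anf that unfolding is_anf_def by metis
  then show ?thesis unfolding is_const_def by simp
qed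

lemma odd_card_iff_odd_fibres:
  assumes "finite A"
  shows "odd (card A) \<longleftrightarrow> odd (card {y \<in> f ` A. odd (card {x \<in> A. f x = y})})"
proof -
  have "card A = (\<Sum>y\<in>f ` A. card {x \<in> A. f x = y})"
    using sum.image_gen[OF assms, of "\<lambda>_. 1" f] by (simp only: card_eq_sum)
  then show ?thesis using assms by (simp add: even_sum_iff)
qed

lemma is_anf_zero_vars:
  assumes "is_anf n M g"
  shows "is_anf n {S \<in> M. S \<inter> V = {}} (\<lambda>x. g (x - V))"
  unfolding is_anf_def
proof (intro conjI allI impI)
  show "{S \<in> M. S \<inter> V = {}} \<subseteq> Pow {..<n}" using assms unfolding is_anf_def by auto
  fix x assume "x \<subseteq> {..<n}"
  moreover have "{S \<in> M. S \<subseteq> x - V} = {S \<in> {S \<in> M. S \<inter> V = {}}. S \<subseteq> x}" by auto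
  ultimately show "g (x - V) = odd (card {S \<in> {S \<in> M. S \<inter> V = {}}. S \<subseteq> x})"
    using assms unfolding is_anf_def by (metis Diff_subset order_trans)
qed

text \<open>Setting x_i to 1 maps each monomial S to S - {i}; monomials that collide in pairs cancel.\<close>

lemma is_anf_restr_True:
  assumes "is_anf n M g" "i < n"
  shows "is_anf n {T \<in> (\<lambda>S. S - {i}) ` M. odd (card {S \<in> M. S - {i} = T})} (restr i True g)"
  unfolding is_anf_def
proof (intro conjI allI impI)
  show "{T \<in> (\<lambda>S. S - {i}) ` M. odd (card {S \<in> M. S - {i} = T})} \<subseteq> Pow {..<n}"
    using assms(1) unfolding is_anf_def by auto
  fix x assume x: "x \<subseteq> {..<n}"
  define A where "A = {S \<in> M. S - {i} \<subseteq> x}"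
  have "finite A" using is_anf_imp_finite[OF assms(1)] unfolding A_def by simp
  have "restr i True g x \<longleftrightarrow> odd (card A)"
  proof -
    have "insert i x \<subseteq> {..<n}" using x assms(2) by simp
    moreover have "{S \<in> M. S \<subseteq> insert i x} = A" unfolding A_def by auto
    ultimately show ?thesis using assms(1) unfolding is_anf_def restr_def by auto
  qed
  also have "\<dots> \<longleftrightarrow> odd (card {T \<in> (\<lambda>S. S - {i}) ` A. odd (card {S \<in> A. S - {i} = T})})"
    using \<open>finite A\<close> by (rule odd_card_iff_odd_fibres)
  also have "{T \<in> (\<lambda>S. S - {i}) ` A. odd (card {S \<in> A. S - {i} = T})}
      = {T \<in> {T \<in> (\<lambda>S. S - {i}) ` M. odd (card {S \<in> M. S - {i} = T})}. T \<subseteq> x}"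
  proof -
    have "(\<lambda>S. S - {i}) ` A = {T \<in> (\<lambda>S. S - {i}) ` M. T \<subseteq> x}" unfolding A_def by auto
    moreover have "{S \<in> A. S - {i} = T} = {S \<in> M. S - {i} = T}" if "T \<subseteq> x" for T
      using that unfolding A_def by auto
    ultimately show ?thesis by (smt (verit) Collect_cong mem_Collect_eq)
  qed
  finally show "restr i True g x
      \<longleftrightarrow> odd (card {T \<in> {T \<in> (\<lambda>S. S - {i}) ` M. odd (card {S \<in> M. S - {i} = T})}. T \<subseteq> x})" .
qed

lemma psize_restr_True_le:
  assumes "i < n" shows "psize n (restr i True g) \<le> psize n g"
proof -
  let ?M = "anf n g"
  have "anf n (restr i True g) = {T \<in> (\<lambda>S. S - {i}) ` ?M. odd (card {S \<in> ?M. S - {i} = T})}"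
    using anf_eqI is_anf_restr_True[OF is_anf_anf assms] by blast
  then have "anf n (restr i True g) - {{}} \<subseteq> (\<lambda>S. S - {i}) ` (?M - {{}})" by auto
  then have "psize n (restr i True g) \<le> card ((\<lambda>S. S - {i}) ` (?M - {{}}))"
    unfolding psize_def by (simp add: card_mono finite_anf)
  also have "\<dots> \<le> psize n g" unfolding psize_def by (simp add: card_image_le finite_anf)
  finally show ?thesis .
qed

lemma psize_restr_False:
  "psize n (restr i False g) + card {S \<in> anf n g - {{}}. i \<in> S} = psize n g"
proof -
  have "restr i False g = (\<lambda>x. g (x - {i}))" unfolding restr_def by simp
  then have "anf n (restr i False g) = {S \<in> anf n g. S \<inter> {i} = {}}"
    using anf_eqI[OF is_anf_zero_vars[OF is_anf_anf]] by simp
  then have "anf n (restr i False g) - {{}} = {S \<in> anf n g - {{}}. i \<notin> S}" by auto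
  moreover have "card (anf n g - {{}})
      = card {S \<in> anf n g - {{}}. i \<notin> S} + card {S \<in> anf n g - {{}}. i \<in> S}"
    using finite_anf by (subst card_Un_disjoint[symmetric]) (auto intro: arg_cong[where f = card])
  ultimately show ?thesis unfolding psize_def by simp
qed

definition computes :: "nat \<Rightarrow> dtree \<Rightarrow> bfun \<Rightarrow> bool" where
  "computes n T g \<longleftrightarrow> (\<forall>x. x \<subseteq> {..<n} \<longrightarrow> evalT T x = g x)"

lemma depth_pos_if_not_const:
  assumes "computes n T g" "\<not> is_const n g" shows "depth T \<ge> 1"
  using assms by (cases T) (auto simp: computes_def is_const_def)

fun zero_path_vars :: "dtree \<Rightarrow> nat set" where
  "zero_path_vars (Leaf b) = {}"
| "zero_path_vars (Node i l r) = insert i (zero_path_vars l)"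

lemma evalT_disjoint_zero_path: "x \<inter> zero_path_vars T = {} \<Longrightarrow> evalT T x = evalT T {}"
  by (induction T) auto

lemma finite_zero_path_vars: "finite (zero_path_vars T)"
  by (induction T) auto

lemma card_zero_path_vars_le_depth: "card (zero_path_vars T) \<le> depth T"
  by (induction T) (auto intro: le_trans[OF card_insert_le_m1] simp: finite_zero_path_vars)

lemma anf_monomial_meets_zero_path:
  assumes "computes n T g" "S \<in> anf n g - {{}}"
  shows "S \<inter> zero_path_vars T \<noteq> {}"
proof -
  let ?V = "zero_path_vars T"
  have "g (x - ?V) = g {}" if "x \<subseteq> {..<n}" for x
    using assms(1) that evalT_disjoint_zero_path[of "x - ?V" T] unfolding computes_def
    by (metis Diff_disjoint Diff_subset empty_subsetI inf_commute order_trans)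
  then have "anf n (\<lambda>x. g (x - ?V)) \<subseteq> {{}}" by (simp add: anf_const)
  moreover have "anf n (\<lambda>x. g (x - ?V)) = {S \<in> anf n g. S \<inter> ?V = {}}"
    by (rule anf_eqI, rule is_anf_zero_vars, rule is_anf_anf)
  ultimately show ?thesis using assms(2) by auto
qed

fun restrT :: "nat \<Rightarrow> bool \<Rightarrow> dtree \<Rightarrow> dtree" where
  "restrT i b (Leaf c) = Leaf c"
| "restrT i b (Node j l r) =
     (if j = i then restrT i b (if b then r else l) else Node j (restrT i b l) (restrT i b r))"

lemma evalT_restrT: "evalT (restrT i b T) x = evalT T (if b then insert i x else x - {i})"
  by (induction T) auto

lemma depth_restrT_le: "depth (restrT i b T) \<le> depth T"
  by (induction T) (auto simp: le_SucI)

lemma computes_restr: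
  assumes "computes n T g" "i < n" shows "computes n (restrT i b T) (restr i b g)"
  using assms unfolding computes_def restr_def evalT_restrT by (auto dest: subset_trans[OF Diff_subset])

lemma exists_element_in_many_members:
  assumes "finite M" "M \<noteq> {}" "finite V" "card V \<le> d" "\<forall>S\<in>M. S \<inter> V \<noteq> {}"
  shows "\<exists>i\<in>V. card M \<le> d * card {S \<in> M. i \<in> S}"
proof (rule ccontr)
  assume "\<not> ?thesis"
  then have less: "d * card {S \<in> M. i \<in> S} < card M" if "i \<in> V" for i
    using that by (simp add: not_le)
  have "V \<noteq> {}" using assms(2,5) by auto
  have "card M \<le> card (\<Union>i\<in>V. {S \<in> M. i \<in> S})"
    using assms(1,3,5) by (intro card_mono) auto
  also have "\<dots> \<le> (\<Sum>i\<in>V. card {S \<in> M. i \<in> S})"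
    using assms(3) by (rule card_UN_le)
  finally have "d * card M \<le> (\<Sum>i\<in>V. d * card {S \<in> M. i \<in> S})"
    by (metis mult_le_mono2 sum_distrib_left)
  also have "\<dots> < (\<Sum>i\<in>V. card M)"
    using \<open>finite V\<close> \<open>V \<noteq> {}\<close> less by (rule sum_strict_mono)
  also have "\<dots> \<le> d * card M" using assms(4) by simp
  finally show False by simp
qed

lemma frequent_variable:
  assumes "computes n T g" "depth T \<le> d" "\<not> is_const n g"
  shows "\<exists>i<n. psize n g \<le> d * card {S \<in> anf n g - {{}}. i \<in> S}"
proof -
  have "psize n g \<noteq> 0" using assms(3) is_const_if_psize_eq_0 by blast
  then have "anf n g - {{}} \<noteq> {}" unfolding psize_def by (metis card.empty)
  moreover have "card (zero_path_vars T) \<le> d"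
    using card_zero_path_vars_le_depth assms(2) by (rule le_trans)
  ultimately obtain i where "psize n g \<le> d * card {S \<in> anf n g - {{}}. i \<in> S}"
    using exists_element_in_many_members[of "anf n g - {{}}" "zero_path_vars T" d]
      finite_anf finite_zero_path_vars anf_monomial_meets_zero_path[OF assms(1)]
    unfolding psize_def by blast
  moreover from this have "{S \<in> anf n g - {{}}. i \<in> S} \<noteq> {}"
    using \<open>psize n g \<noteq> 0\<close> by (metis card.empty mult_0_right le_0_eq)
  then have "i < n" using anf_subset_Pow by blast
  ultimately show ?thesis by blast
qed

lemma split_var_minimal:
  assumes "n > 0"
  shows "split_var n f < n"
    and "\<And>j. j < n \<Longrightarrow> psize n (restr (split_var n f) False f) \<le> psize n (restr j False f)"
proof -
  obtain i where "i < n \<and> (\<forall>j<n. psize n (restr i False f) \<le> psize n (restr j False f))"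
    using ex_has_least_nat[of "\<lambda>i. i < n" 0 "\<lambda>i. psize n (restr i False f)"] assms by blast
  then have "split_var n f < n \<and>
      (\<forall>j<n. psize n (restr (split_var n f) False f) \<le> psize n (restr j False f))"
    unfolding split_var_def by (rule LeastI)
  then show "split_var n f < n" "\<And>j. j < n \<Longrightarrow>
      psize n (restr (split_var n f) False f) \<le> psize n (restr j False f)"
    by blast+
qed

lemma n_pos_if_not_const: "\<not> is_const n g \<Longrightarrow> n > 0"
  unfolding is_const_def by (metis lessThan_0 not_gr_zero subset_empty)

lemma psize_restr_split_var_le:
  assumes "computes n T g" "depth T \<le> d" "\<not> is_const n g"
  shows "d * psize n (restr (split_var n g) False g) \<le> (d - 1) * psize n g"
proof -
  obtain i where "i < n" and many: "psize n g \<le> d * card {S \<in> anf n g - {{}}. i \<in> S}"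
    using frequent_variable[OF assms] by blast
  let ?c = "card {S \<in> anf n g - {{}}. i \<in> S}"
  have "psize n (restr (split_var n g) False g) \<le> psize n (restr i False g)"
    using split_var_minimal[OF n_pos_if_not_const[OF assms(3)]] \<open>i < n\<close> by blast
  also have "\<dots> = psize n g - ?c"
    using psize_restr_False[of n i g] by linarith
  finally have "d * psize n (restr (split_var n g) False g) \<le> d * (psize n g - ?c)"
    by (rule mult_le_mono2)
  also have "\<dots> = d * psize n g - d * ?c" by (simp add: diff_mult_distrib2)
  also have "\<dots> \<le> d * psize n g - psize n g" using many by (rule diff_le_mono2)
  also have "\<dots> = (d - 1) * psize n g" by (simp add: diff_mult_distrib)
  finally show ?thesis .
qed

text \<open>Psize 0 means g is constant, so T_g is a leaf; the case split keeps ln away from 0.\<close>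

definition potential :: "nat \<Rightarrow> nat \<Rightarrow> real" where
  "potential d p = (if p = 0 then 0 else real d * ln (real p) + 1)"

lemma potential_nonneg: "0 \<le> potential d p"
  unfolding potential_def by auto

lemma potential_mono:
  assumes "p' \<le> p" shows "potential d p' \<le> potential d p"
  using assms potential_nonneg[of d p] unfolding potential_def
  by (auto intro: mult_left_mono)

text \<open>Shrinking p by the factor 1 - 1/d lowers d ln p by at least 1, as ln (1 - 1/d) \<le> -1/d.\<close>

lemma potential_step:
  assumes "p \<ge> 1" "d \<ge> 1" "d * p' \<le> (d - 1) * p"
  shows "potential d p' + 1 \<le> potential d p"
proof (cases "p' = 0")
  case True then show ?thesis using assms unfolding potential_def by simp
next
  case False
  have pos: "real p > 0" "real p' > 0" "real d > 0" using assms False by auto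
  have "real d * real p' \<le> (real d - 1) * real p"
    using assms(2,3) by (metis of_nat_1 of_nat_diff of_nat_le_iff of_nat_mult)
  then have "real p' / real p \<le> 1 - 1 / real d" using pos by (simp add: field_simps)
  moreover have "ln (real p' / real p) \<le> real p' / real p - 1" using pos by (intro ln_le_minus_one) simp
  ultimately have "ln (real p') - ln (real p) \<le> - 1 / real d" using pos by (simp add: ln_div)
  then have "real d * ln (real p') + 1 \<le> real d * ln (real p)"
    using pos by (simp add: field_simps)
  then show ?thesis using False assms unfolding potential_def by simp
qed

lemma zero_depth_Tf_aux_le:
  assumes "computes n T g" "depth T \<le> d"
  shows "real (zero_depth (Tf_aux n k g)) \<le> potential d (psize n g)"
  using assms
proof (induction k arbitrary: g T)
  case 0 then show ?case by (simp add: potential_nonneg)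
next
  case (Suc k)
  show ?case
  proof (cases "is_const n g")
    case True then show ?thesis by (simp add: potential_nonneg)
  next
    case False
    define j where "j = split_var n g"
    have "j < n" unfolding j_def using split_var_minimal n_pos_if_not_const[OF False] by blast
    have IH: "real (zero_depth (Tf_aux n k (restr j b g))) \<le> potential d (psize n (restr j b g))"
      for b using Suc.IH[OF computes_restr[OF Suc.prems(1) \<open>j < n\<close>]]
        depth_restrT_le Suc.prems(2) le_trans by blast
    have "potential d (psize n (restr j False g)) + 1 \<le> potential d (psize n g)"
    proof (rule potential_step)
      show "psize n g \<ge> 1" using False is_const_if_psize_eq_0 by (metis less_one not_le)
      show "d \<ge> 1" using depth_pos_if_not_const[OF Suc.prems(1) False] Suc.prems(2) by linarith
      show "d * psize n (restr j False g) \<le> (d - 1) * psize n g"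
        unfolding j_def using psize_restr_split_var_le[OF Suc.prems False] .
    qed
    moreover have "potential d (psize n (restr j True g)) \<le> potential d (psize n g)"
      by (rule potential_mono, rule psize_restr_True_le[OF \<open>j < n\<close>])
    moreover have "Tf_aux n (Suc k) g = Node j (Tf_aux n k (restr j False g)) (Tf_aux n k (restr j True g))"
      using False unfolding j_def by (simp add: Let_def)
    ultimately show ?thesis using IH[of False] IH[of True] by simp
  qed
qed

theorem mainTheorem20:
  fixes n d :: nat and f :: "nat set \<Rightarrow> bool" and T :: dtree
  assumes "psize n f \<ge> 1"
    and "depth T = d"
    and "\<forall>x. x \<subseteq> {..<n} \<longrightarrow> evalT T x = f x"
  shows "real (zero_depth (Tf n f)) \<le> real d * ln (real (psize n f)) + 1"
proof -
  have "computes n T f" using assms(3) unfolding computes_def .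
  then have "real (zero_depth (Tf n f)) \<le> potential d (psize n f)"
    unfolding Tf_def using zero_depth_Tf_aux_le assms(2) by blast
  then show ?thesis using assms(1) unfolding potential_def by simp
qed

end
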